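(* Let $\Gamma=(N,A,u)$ be a finite game with a unique correlated equilibrium $q^*$. Then $\mathcal{I}=\mathcal{I}_{q^*}=\{\mu\in\Delta A:\mathrm{supp}(\mu)\subseteq\mathrm{supp}(q^* ),\ \mathbb{E}_\mu[\log q^*]=\mathbb{E}_{q^*}[\log q^*]\}$; equivalently (given that $\mathcal{I}$ is the set of directly implementable outcomes), $\mu$ is directly implementable if and only if $\mathrm{supp}(\mu)\subseteq\mathrm{supp}(q^* )$ and $\mathbb{E}_\mu[\log q^*]=\mathbb{E}_{q^*}[\log q^*]$.
   Context: A finite game has finite player set $N$, finite action sets $A_i$, $A=\times_iA_i$, utilities $u_i:A\to\mathbb{R}$. $\mathrm{CE}(\Gamma)$ is the set of correlated equilibria: $p\in\Delta A$ such that for all $i$, all $a_i$ with $\sum_{a_{-i}}p_{a_i,a_{-i}}>0$, all $b\in A_i$, $\sum_{a_{-i}}p_{a_i,a_{-i}}[u_i(a_i,a_{-i})-u_i(b,a_{-i})]\ge0$. For $q\in\Delta A$, $\mathcal{I}_q=\{\mu\in\Delta A:\mathrm{supp}(\mu)\subseteq\mathrm{supp}(q),\ \mathbb{E}_\mu[\log q]=\mathbb{E}_q[\log q]\}$ and $\mathcal{I}=\bigcup_{q\in\mathrm{CE}(\Gamma)}\mathcal{I}_q$ (convention $0\log 0=0$). Direct implementability: with a partially specified data-generating process $(M,\eta,\mathcal{F})$, $M=A$, $\eta\in\Delta A$, $\mathcal{F}\subseteq\{f:A\to\mathbb{R}\}$, the belief $q$ is the unique maximizer of $-\sum_aq_a\log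 q_a$ over $\{q\in\Delta A:\sum_aq_af(a)=\sum_a\eta_af(a)\ \forall f\in\mathcal{F}\}$; $\mu$ is directly implementable if for some such process with $\eta=\mu$ the obedience conditions $\sum_{a_{-i}}q_{a_i,a_{-i}}[u_i(a_i,a_{-i})-u_i(b,a_{-i})]\ge0$ hold for all $i$, all $a_i$ with positive $q$-marginal, all $b\in A_i$. *)

theory Defs
  imports Complex_Main "HOL-Library.FuncSet"
begin

definition profiles :: "'i set \<Rightarrow> ('i \<Rightarrow> 'a set) \<Rightarrow> ('i \<Rightarrow> 'a) set" where
  "profiles N Act = PiE N Act"

definition Delta :: "('i \<Rightarrow> 'a) set \<Rightarrow> (('i \<Rightarrow> 'a) \<Rightarrow> real) set" where
  "Delta P = {p. (\<forall>a\<in>P. 0 \<le> p a) \<and> sum p P = 1 \<and> (\<forall>a. a \<notin> P \<longrightarrow> p a = 0)}"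

definition obedient :: "'i set \<Rightarrow> ('i \<Rightarrow> 'a set) \<Rightarrow> ('i \<Rightarrow> ('i \<Rightarrow> 'a) \<Rightarrow> real)
    \<Rightarrow> (('i \<Rightarrow> 'a) \<Rightarrow> real) \<Rightarrow> bool" where
  "obedient N Act u q \<longleftrightarrow>
     (\<forall>i\<in>N. \<forall>ai\<in>Act i. \<forall>b\<in>Act i.
        (\<Sum>a\<in>{a\<in>profiles N Act. a i = ai}. q a) > 0 \<longrightarrow>
        (\<Sum>a\<in>{a\<in>profiles N Act. a i = ai}. q a * (u i a - u i (a(i := b)))) \<ge> 0)"

definition CE :: "'i set \<Rightarrow> ('i \<Rightarrow> 'a set) \<Rightarrow> ('i \<Rightarrow> ('i \<Rightarrow> 'a) \<Rightarrow> real)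
    \<Rightarrow> (('i \<Rightarrow> 'a) \<Rightarrow> real) set" where
  "CE N Act u = {p \<in> Delta (profiles N Act). obedient N Act u p}"

text \<open>I_q; note ln 0 = 0 in Isabelle, matching the convention 0 log 0 = 0.\<close>
definition I_q :: "('i \<Rightarrow> 'a) set \<Rightarrow> (('i \<Rightarrow> 'a) \<Rightarrow> real) \<Rightarrow> (('i \<Rightarrow> 'a) \<Rightarrow> real) set" where
  "I_q P q = {\<mu> \<in> Delta P. {a\<in>P. \<mu> a \<noteq> 0} \<subseteq> {a\<in>P. q a \<noteq> 0} \<and>
       (\<Sum>a\<in>P. \<mu> a * ln (q a)) = (\<Sum>a\<in>P. q a * ln (q a))}"

definition I_set :: "'i set \<Rightarrow> ('i \<Rightarrow> 'a set) \<Rightarrow> ('i \<Rightarrow> ('i \<Rightarrow> 'a) \<Rightarrow> real)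
    \<Rightarrow> (('i \<Rightarrow> 'a) \<Rightarrow> real) set" where
  "I_set N Act u = (\<Union>q\<in>CE N Act u. I_q (profiles N Act) q)"

definition entropy :: "('i \<Rightarrow> 'a) set \<Rightarrow> (('i \<Rightarrow> 'a) \<Rightarrow> real) \<Rightarrow> real" where
  "entropy P q = - (\<Sum>a\<in>P. q a * ln (q a))"

text \<open>Beliefs consistent with the partially specified process (M = A, eta, F).\<close>
definition consistent :: "('i \<Rightarrow> 'a) set \<Rightarrow> (('i \<Rightarrow> 'a) \<Rightarrow> real) set
    \<Rightarrow> (('i \<Rightarrow> 'a) \<Rightarrow> real) \<Rightarrow> (('i \<Rightarrow> 'a) \<Rightarrow> real) set" where
  "consistent P F \<eta> = {q \<in> Delta P. \<forall>f\<in>F. (\<Sum>a\<in>P. q a * f a) = (\<Sum>a\<in>P. \<eta> a * f a)}"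

definition maxent_belief :: "('i \<Rightarrow> 'a) set \<Rightarrow> (('i \<Rightarrow> 'a) \<Rightarrow> real) set
    \<Rightarrow> (('i \<Rightarrow> 'a) \<Rightarrow> real) \<Rightarrow> (('i \<Rightarrow> 'a) \<Rightarrow> real) \<Rightarrow> bool" where
  "maxent_belief P F \<eta> q \<longleftrightarrow> q \<in> consistent P F \<eta> \<and>
     (\<forall>q'\<in>consistent P F \<eta>. q' \<noteq> q \<longrightarrow> entropy P q' < entropy P q)"

definition directly_implementable :: "'i set \<Rightarrow> ('i \<Rightarrow> 'a set) \<Rightarrow> ('i \<Rightarrow> ('i \<Rightarrow> 'a) \<Rightarrow> real)
    \<Rightarrow> (('i \<Rightarrow> 'a) \<Rightarrow> real) \<Rightarrow> bool" where
  "directly_implementable N Act u \<mu> \<longleftrightarrow> \<mu> \<in> Delta (profiles N Act) \<and>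
     (\<exists>F q. maxent_belief (profiles N Act) F \<mu> q \<and> obedient N Act u q)"

end

theory Submission
  imports Defs
begin

text \<open>A belief q that directly implements \<mu> is obedient, hence a correlated equilibrium,
  hence q = q*.  The constraints are linear and satisfied by \<mu>, so q maximises entropy on
  the line through q and \<mu> as long as that line stays in the simplex.  A first-order
  analysis of this one-dimensional problem gives supp \<mu> \<subseteq> supp q (the slope of
  -x ln x is infinite at 0) and E_\<mu>[ln q] = E_q[ln q].  Conversely, for \<mu> in I_q*,
  constraining the mass off supp q* and the expectation of ln q* singles out q* by Gibbs'
  inequality.\<close>

definition mix :: "('b \<Rightarrow> real) \<Rightarrow> ('b \<Rightarrow> real) \<Rightarrow> real \<Rightarrow> 'b \<Rightarrow> real" where
  "mix q \<mu> t a = q a + t * (\<mu> a - q a)"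

lemma mix_0: "mix q \<mu> 0 = q"
  by (simp add: mix_def fun_eq_iff)

lemma mult_ln_diff_le:
  fixes x y :: real
  assumes "0 \<le> x" "0 < y"
  shows "x * (ln y - ln x) \<le> y - x"
proof (cases "x = 0")
  case False
  then have "x * (ln y - ln x) = x * ln (y / x)" using assms by (simp add: ln_div)
  also have "\<dots> \<le> x * (y / x - 1)" using False assms by (intro mult_left_mono ln_le_minus_one) auto
  also have "\<dots> = y - x" using False by (simp add: field_simps)
  finally show ?thesis .
qed (use assms in simp)

lemma mult_ln_diff_less:
  fixes x y :: real
  assumes "0 \<le> x" "0 < y" "x \<noteq> y"
  shows "x * (ln y - ln x) < y - x"
proof (cases "x = 0")
  case False
  have "ln (y / x) \<noteq> y / x - 1"
    using ln_eq_minus_one[of "y / x"] False assms by auto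
  then have "ln (y / x) < y / x - 1"
    using ln_le_minus_one[of "y / x"] False assms by simp
  then have "x * ln (y / x) < x * (y / x - 1)" using False assms by simp
  also have "\<dots> = y - x" using False by (simp add: field_simps)
  finally show ?thesis using False assms by (simp add: ln_div)
qed (use assms in simp)

lemma Delta_nonneg: "p \<in> Delta P \<Longrightarrow> a \<in> P \<Longrightarrow> 0 \<le> p a"
  by (simp add: Delta_def)

lemma Delta_eq_0: "p \<in> Delta P \<Longrightarrow> a \<notin> P \<Longrightarrow> p a = 0"
  by (simp add: Delta_def)

lemma Delta_sum: "p \<in> Delta P \<Longrightarrow> sum p P = 1"
  by (simp add: Delta_def)

lemma Delta_le_1:
  assumes "finite P" "p \<in> Delta P" "a \<in> P"
  shows "p a \<le> 1"
proof -
  have "p a \<le> sum p P" using assms by (intro member_le_sum) (auto simp: Delta_def)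
  then show ?thesis using Delta_sum[OF assms(2)] by simp
qed

lemma entropy_less_cross_entropy:
  assumes fin: "finite P" and p: "p \<in> Delta P" and q: "q \<in> Delta P"
    and supp: "\<forall>a\<in>P. q a = 0 \<longrightarrow> p a = 0" and "p \<noteq> q"
  shows "entropy P p < - (\<Sum>a\<in>P. p a * ln (q a))"
proof -
  have le: "p a * (ln (q a) - ln (p a)) \<le> q a - p a" if "a \<in> P" for a
    using that supp Delta_nonneg[OF p that] Delta_nonneg[OF q that]
    by (cases "q a = 0") (auto intro: mult_ln_diff_le)
  obtain a where "p a \<noteq> q a" using \<open>p \<noteq> q\<close> by auto
  then have a: "a \<in> P" using Delta_eq_0[OF p] Delta_eq_0[OF q] by metis
  with \<open>p a \<noteq> q a\<close> supp have less: "p a * (ln (q a) - ln (p a)) < q a - p a"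
    using Delta_nonneg[OF p a] Delta_nonneg[OF q a] by (intro mult_ln_diff_less) auto
  have "(\<Sum>a\<in>P. p a * (ln (q a) - ln (p a))) < (\<Sum>a\<in>P. q a - p a)"
    using fin le less a by (intro sum_strict_mono_ex1) auto
  also have "\<dots> = 0" using Delta_sum[OF p] Delta_sum[OF q] by (simp add: sum_subtractf)
  finally show ?thesis
    by (simp add: entropy_def right_diff_distrib sum_subtractf)
qed

lemma mix_pos_or_eq:
  assumes "0 \<le> q a" "0 \<le> \<mu> a" "0 < t" "t < 1"
  shows "0 < mix q \<mu> t a \<or> \<mu> a = q a"
proof -
  have "mix q \<mu> t a = (1 - t) * q a + t * \<mu> a" by (simp add: mix_def algebra_simps)
  moreover have "0 < (1 - t) * q a \<or> 0 < t * \<mu> a \<or> \<mu> a = q a"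
    using assms by (cases "q a = 0"; cases "\<mu> a = 0") auto
  ultimately show ?thesis using assms by (auto intro: add_pos_nonneg add_nonneg_pos)
qed

lemma mix_in_Delta:
  assumes "q \<in> Delta P" "\<mu> \<in> Delta P" "\<forall>a\<in>P. 0 \<le> mix q \<mu> t a"
  shows "mix q \<mu> t \<in> Delta P"
proof -
  have "sum (mix q \<mu> t) P = sum q P + t * (sum \<mu> P - sum q P)"
    by (simp add: mix_def sum.distrib sum_subtractf flip: sum_distrib_left)
  then show ?thesis using assms by (auto simp: Delta_def mix_def)
qed

lemma mix_in_consistent:
  assumes "q \<in> consistent P F \<mu>" "mix q \<mu> t \<in> Delta P"
  shows "mix q \<mu> t \<in> consistent P F \<mu>"
proof -
  have "(\<Sum>a\<in>P. mix q \<mu> t a * f a) = (\<Sum>a\<in>P. \<mu> a * f a)" if "f \<in> F" for f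
  proof -
    have "(\<Sum>a\<in>P. mix q \<mu> t a * f a)
          = (\<Sum>a\<in>P. q a * f a) + t * ((\<Sum>a\<in>P. \<mu> a * f a) - (\<Sum>a\<in>P. q a * f a))"
      by (simp add: mix_def algebra_simps sum.distrib sum_subtractf flip: sum_distrib_left)
    then show ?thesis using assms that by (simp add: consistent_def)
  qed
  then show ?thesis using assms by (simp add: consistent_def)
qed

lemma maxent_belief_in_Delta: "maxent_belief P F \<mu> q \<Longrightarrow> q \<in> Delta P"
  by (simp add: maxent_belief_def consistent_def)

lemma maxent_belief_entropy_mix_le:
  assumes "maxent_belief P F \<mu> q" "mix q \<mu> t \<in> Delta P"
  shows "entropy P (mix q \<mu> t) \<le> entropy P q"
  using assms mix_in_consistent[of q P F \<mu> t]
  by (cases "mix q \<mu> t = q") (auto simp: maxent_belief_def intro: less_imp_le)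

text \<open>The tangent inequality for -x ln x at mix q \<mu> t, summed over P, bounds the
  entropy gained by stepping from mix q \<mu> t back to q by t times the directional
  derivative at mix q \<mu> t.\<close>
lemma entropy_max_on_line_slope:
  assumes q: "q \<in> Delta P" and \<mu>: "\<mu> \<in> Delta P"
    and max: "\<And>t. mix q \<mu> t \<in> Delta P \<Longrightarrow> entropy P (mix q \<mu> t) \<le> entropy P q"
    and pos: "\<forall>a\<in>P. 0 < mix q \<mu> t a \<or> \<mu> a = q a"
  shows "0 \<le> t * (\<Sum>a\<in>P. (\<mu> a - q a) * ln (mix q \<mu> t a))"
proof -
  let ?qt = "mix q \<mu> t"
  have tangent: "- q a * ln (q a) + ?qt a * ln (?qt a)
      \<le> t * ((\<mu> a - q a) * ln (?qt a)) + t * (\<mu> a - q a)" if "a \<in> P" for a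
  proof (cases "\<mu> a = q a")
    case False
    then have "q a * (ln (?qt a) - ln (q a)) \<le> ?qt a - q a"
      using pos that Delta_nonneg[OF q that] by (intro mult_ln_diff_le) auto
    then show ?thesis by (simp add: mix_def algebra_simps)
  qed (simp add: mix_def)
  have "entropy P q - entropy P ?qt = (\<Sum>a\<in>P. - q a * ln (q a) + ?qt a * ln (?qt a))"
    by (simp add: entropy_def sum_subtractf)
  also have "\<dots> \<le> (\<Sum>a\<in>P. t * ((\<mu> a - q a) * ln (?qt a)) + t * (\<mu> a - q a))"
    using tangent by (intro sum_mono) auto
  also have "\<dots> = t * (\<Sum>a\<in>P. (\<mu> a - q a) * ln (?qt a)) + t * (sum \<mu> P - sum q P)"
    by (simp add: sum.distrib sum_subtractf flip: sum_distrib_left)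
  also have "\<dots> = t * (\<Sum>a\<in>P. (\<mu> a - q a) * ln (?qt a))"
    using Delta_sum[OF q] Delta_sum[OF \<mu>] by simp
  finally have "entropy P q - entropy P ?qt \<le> t * (\<Sum>a\<in>P. (\<mu> a - q a) * ln (?qt a))" .
  moreover have "?qt \<in> Delta P"
    using pos q \<mu> by (intro mix_in_Delta) (auto simp: mix_def Delta_def less_imp_le)
  ultimately show ?thesis using max by fastforce
qed

lemma isCont_zero_of_mult_nonneg:
  fixes g :: "real \<Rightarrow> real"
  assumes "isCont g 0" and "\<forall>\<^sub>F t in at 0. 0 \<le> t * g t"
  shows "g 0 = 0"
proof -
  have "\<forall>\<^sub>F t in at_right 0. 0 \<le> g t"
    using assms(2) unfolding eventually_at_split
    by (auto elim: eventually_mono simp: eventually_at_filter zero_le_mult_iff)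
  with assms(1) have "0 \<le> g 0"
    by (intro tendsto_lowerbound[of g]) (auto simp: isCont_def filterlim_at_split)
  moreover have "\<forall>\<^sub>F t in at_left 0. g t \<le> 0"
    using assms(2) unfolding eventually_at_split
    by (auto elim: eventually_mono simp: eventually_at_filter zero_le_mult_iff)
  with assms(1) have "g 0 \<le> 0"
    by (intro tendsto_upperbound[of g]) (auto simp: isCont_def filterlim_at_split)
  ultimately show ?thesis by simp
qed

text \<open>If \<mu> charged an action a0 outside the support of q, the term of a0 in the
  directional derivative would be \<mu> a0 * ln (t * \<mu> a0), which tends to -\<infinity> as t \<rightarrow> 0+,
  while all terms on the support of q stay bounded.\<close>
lemma entropy_max_on_line_support:
  assumes fin: "finite P" and q: "q \<in> Delta P" and \<mu>: "\<mu> \<in> Delta P"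
    and max: "\<And>t. mix q \<mu> t \<in> Delta P \<Longrightarrow> entropy P (mix q \<mu> t) \<le> entropy P q"
    and a0: "a0 \<in> P" "q a0 = 0"
  shows "\<mu> a0 = 0"
proof (rule ccontr)
  assume "\<mu> a0 \<noteq> 0"
  define g where "g t = (\<Sum>a\<in>P. (\<mu> a - q a) * ln (mix q \<mu> t a))" for t
  define S where "S = {a\<in>P. 0 < q a}"
  define c where "c t = (\<Sum>a\<in>S. (\<mu> a - q a) * ln (mix q \<mu> t a))" for t
  define m where "m = sum \<mu> (P - S)"
  have "\<mu> a0 \<le> m"
    unfolding m_def using fin a0 Delta_nonneg[OF \<mu>] by (intro member_le_sum) (auto simp: S_def)
  then have m_pos: "0 < m" using \<open>\<mu> a0 \<noteq> 0\<close> Delta_nonneg[OF \<mu> a0(1)] by simp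
  have g_le: "g t \<le> c t + m * ln t" if "0 < t" for t
  proof -
    have "(\<mu> a - q a) * ln (mix q \<mu> t a) \<le> \<mu> a * ln t" if "a \<in> P - S" for a
    proof -
      have "q a = 0" using that Delta_nonneg[OF q] by (force simp: S_def)
      have "\<mu> a * ln (\<mu> a) \<le> 0"
        using that Delta_nonneg[OF \<mu>, of a] Delta_le_1[OF fin \<mu>, of a]
        by (cases "\<mu> a = 0") (auto intro: mult_nonneg_nonpos)
      with \<open>q a = 0\<close> \<open>0 < t\<close> show ?thesis
        by (cases "\<mu> a = 0") (auto simp: mix_def ln_mult distrib_left)
    qed
    then have "(\<Sum>a\<in>P - S. (\<mu> a - q a) * ln (mix q \<mu> t a)) \<le> m * ln t"
      unfolding m_def sum_distrib_right by (rule sum_mono)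
    moreover have "g t = c t + (\<Sum>a\<in>P - S. (\<mu> a - q a) * ln (mix q \<mu> t a))"
      unfolding g_def c_def using fin by (subst sum.subset_diff[of S]) (auto simp: S_def)
    ultimately show ?thesis by simp
  qed
  have small: "\<forall>\<^sub>F t in at_right (0::real). 0 < t \<and> t < 1"
    by (rule eventually_at_rightI[of 0 1]) auto
  then have "\<forall>\<^sub>F t in at_right 0. 0 \<le> g t"
  proof (rule eventually_mono)
    fix t :: real assume t: "0 < t \<and> t < 1"
    then have "0 \<le> t * g t" unfolding g_def
      using Delta_nonneg[OF q] Delta_nonneg[OF \<mu>] t
      by (intro entropy_max_on_line_slope[OF q \<mu> max] ballI mix_pos_or_eq) auto
    with t show "0 \<le> g t" by (simp add: zero_le_mult_iff)
  qed
  moreover have "\<forall>\<^sub>F t in at_right 0. c t + m * ln t < 0"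
  proof -
    have "(c \<longlongrightarrow> c 0) (at_right 0)"
      unfolding c_def mix_def by (intro tendsto_intros) (auto simp: S_def)
    moreover have "LIM t at_right 0. m * ln t :> at_bot"
      using m_pos by (intro filterlim_tendsto_pos_mult_at_bot[OF tendsto_const _ ln_at_0])
    ultimately have "LIM t at_right 0. c t + m * ln t :> at_bot"
      by (simp add: filterlim_tendsto_add_at_bot_iff)
    then show ?thesis by (simp add: filterlim_at_bot_dense)
  qed
  moreover note small
  ultimately have "\<forall>\<^sub>F t::real in at_right 0. False"
    by eventually_elim (use g_le in fastforce)
  then show False by simp
qed

text \<open>Once \<mu> lives on the support of q, the line can be followed a little in both
  directions, so the directional derivative at q vanishes.\<close>
lemma entropy_max_on_line_moment:
  assumes fin: "finite P" and q: "q \<in> Delta P" and \<mu>: "\<mu> \<in> Delta P"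
    and max: "\<And>t. mix q \<mu> t \<in> Delta P \<Longrightarrow> entropy P (mix q \<mu> t) \<le> entropy P q"
    and supp: "\<forall>a\<in>P. q a = 0 \<longrightarrow> \<mu> a = 0"
  shows "(\<Sum>a\<in>P. \<mu> a * ln (q a)) = (\<Sum>a\<in>P. q a * ln (q a))"
proof -
  define S where "S = {a\<in>P. 0 < q a}"
  define g where "g t = (\<Sum>a\<in>S. (\<mu> a - q a) * ln (mix q \<mu> t a))" for t
  have off_S: "\<mu> a = q a" if "a \<in> P - S" for a
    using that supp Delta_nonneg[OF q] by (force simp: S_def)
  have g_eq: "(\<Sum>a\<in>P. (\<mu> a - q a) * ln (mix q \<mu> t a)) = g t" for t
    unfolding g_def using fin off_S by (intro sum.mono_neutral_right) (auto simp: S_def)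
  have mix_tendsto: "((\<lambda>t. mix q \<mu> t a) \<longlongrightarrow> q a) (at 0)" for a
    unfolding mix_def by (auto intro!: tendsto_eq_intros)
  have "isCont g 0"
    unfolding g_def mix_def by (intro continuous_intros) (auto simp: S_def)
  moreover have "\<forall>\<^sub>F t in at 0. 0 \<le> t * g t"
  proof -
    have "\<forall>\<^sub>F t in at 0. \<forall>a\<in>S. 0 < mix q \<mu> t a"
      using fin by (intro eventually_ball_finite ballI order_tendstoD(1)[OF mix_tendsto])
        (auto simp: S_def)
    then show ?thesis
    proof (rule eventually_mono)
      fix t assume "\<forall>a\<in>S. 0 < mix q \<mu> t a"
      then have "\<forall>a\<in>P. 0 < mix q \<mu> t a \<or> \<mu> a = q a" using off_S by blast
      from entropy_max_on_line_slope[OF q \<mu> max this] show "0 \<le> t * g t" by (simp add: g_eq)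
    qed
  qed
  ultimately have "g 0 = 0" by (rule isCont_zero_of_mult_nonneg)
  then show ?thesis using g_eq[of 0] by (simp add: mix_0 left_diff_distrib sum_subtractf)
qed

lemma ex_maxent_belief_iff_I_q:
  assumes fin: "finite P" and q: "q \<in> Delta P" and \<mu>: "\<mu> \<in> Delta P"
  shows "(\<exists>F. maxent_belief P F \<mu> q) \<longleftrightarrow> \<mu> \<in> I_q P q"
proof
  assume "\<exists>F. maxent_belief P F \<mu> q"
  then obtain F where "maxent_belief P F \<mu> q" ..
  then have max: "entropy P (mix q \<mu> t) \<le> entropy P q" if "mix q \<mu> t \<in> Delta P" for t
    using that by (rule maxent_belief_entropy_mix_le)
  have supp: "\<forall>a\<in>P. q a = 0 \<longrightarrow> \<mu> a = 0"
    using entropy_max_on_line_support[OF fin q \<mu> max] by blast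
  show "\<mu> \<in> I_q P q"
    using \<mu> supp entropy_max_on_line_moment[OF fin q \<mu> max supp] by (auto simp: I_q_def)
next
  assume "\<mu> \<in> I_q P q"
  then have supp: "\<forall>a\<in>P. q a = 0 \<longrightarrow> \<mu> a = 0"
    and moment: "(\<Sum>a\<in>P. \<mu> a * ln (q a)) = (\<Sum>a\<in>P. q a * ln (q a))"
    by (auto simp: I_q_def)
  define off_supp :: "_ \<Rightarrow> real" where "off_supp a = (if q a = 0 then 1 else 0)" for a
  define F where "F = {off_supp, \<lambda>a. ln (q a)}"
  have sum_off_supp: "(\<Sum>a\<in>P. p a * off_supp a) = 0 \<longleftrightarrow> (\<forall>a\<in>P. q a = 0 \<longrightarrow> p a = 0)"
    if "p \<in> Delta P" for p
    using fin Delta_nonneg[OF that] by (subst sum_nonneg_eq_0_iff) (auto simp: off_supp_def)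
  have "(\<Sum>a\<in>P. q a * off_supp a) = 0" and \<mu>_off_supp: "(\<Sum>a\<in>P. \<mu> a * off_supp a) = 0"
    using sum_off_supp q \<mu> supp by auto
  then have "q \<in> consistent P F \<mu>"
    using q moment by (simp add: consistent_def F_def)
  moreover have "entropy P q' < entropy P q" if "q' \<in> consistent P F \<mu>" "q' \<noteq> q" for q'
  proof -
    have q': "q' \<in> Delta P" and "\<forall>a\<in>P. q a = 0 \<longrightarrow> q' a = 0"
      and "(\<Sum>a\<in>P. q' a * ln (q a)) = (\<Sum>a\<in>P. \<mu> a * ln (q a))"
      using that \<mu>_off_supp sum_off_supp by (auto simp: consistent_def F_def)
    with entropy_less_cross_entropy[OF fin q' q] \<open>q' \<noteq> q\<close> moment show ?thesis
      by (simp add: entropy_def)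
  qed
  ultimately show "\<exists>F. maxent_belief P F \<mu> q" unfolding maxent_belief_def by blast
qed

theorem corollary1:
  fixes N :: "'i set" and Act :: "'i \<Rightarrow> 'a set"
    and u :: "'i \<Rightarrow> ('i \<Rightarrow> 'a) \<Rightarrow> real" and qs :: "('i \<Rightarrow> 'a) \<Rightarrow> real"
  assumes "finite N"
    and "\<forall>i\<in>N. finite (Act i) \<and> Act i \<noteq> {}"
    and "CE N Act u = {qs}"
  shows "I_set N Act u = I_q (profiles N Act) qs
         \<and> (\<forall>\<mu>. directly_implementable N Act u \<mu> \<longleftrightarrow> \<mu> \<in> I_q (profiles N Act) qs)"
proof -
  let ?P = "profiles N Act"
  have fin: "finite ?P" using assms(1,2) by (simp add: profiles_def finite_PiE)
  have qs: "qs \<in> Delta ?P" using assms(3) by (auto simp: CE_def)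
  have "directly_implementable N Act u \<mu> \<longleftrightarrow> \<mu> \<in> I_q ?P qs" for \<mu>
  proof -
    have "directly_implementable N Act u \<mu>
        \<longleftrightarrow> \<mu> \<in> Delta ?P \<and> (\<exists>q\<in>CE N Act u. \<exists>F. maxent_belief ?P F \<mu> q)"
      unfolding directly_implementable_def CE_def using maxent_belief_in_Delta by blast
    also have "\<dots> \<longleftrightarrow> \<mu> \<in> Delta ?P \<and> (\<exists>F. maxent_belief ?P F \<mu> qs)"
      using assms(3) by simp
    also have "\<dots> \<longleftrightarrow> \<mu> \<in> I_q ?P qs"
      using ex_maxent_belief_iff_I_q[OF fin qs] by (auto simp: I_q_def)
    finally show ?thesis .
  qed
  then show ?thesis using assms(3) by (simp add: I_set_def)
qed

end
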